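(* Let $(\mathcal A,\phi)$ be a noncommutative probability space and $\mathcal F$ its free exchangeability system. If $\pi\in\Pi_n$ has a crossing, then $K^{\mathcal F}_\pi(X_1,\dots,X_n)=0$ for all $X_1,\dots,X_n\in\mathcal A$.
   Context: A noncommutative probability space is a pair $(\mathcal A,\phi)$ of a complex unital algebra $\mathcal A$ and a unital linear functional $\phi$. The free exchangeability system $\mathcal F$: $\mathcal U$ is the (unital, algebraic) free product of countably many copies $\mathcal A_k$, $k\in\mathbb N$, of $\mathcal A$, $\tilde\phi$ is the free product functional of copies of $\phi$ (characterized by $\tilde\phi(1)=1$, $\tilde\phi$ restricting to $\phi$ on each copy, and $\tilde\phi(a_1\cdots a_m)=0$ whenever $a_j\in\mathcal A_{k_j}$, $k_j\ne k_{j+1}$, $\tilde\phi(a_j)=0$), and $X\mapsto X^{(k)}$ is the inclusion of the $k$-th copy. For a partition $\sigma$ of $[n]$, $\phi^{\mathcal F}_\sigma(X_1,\dots,X_n)=\tilde\phi(X_1^{(i_1)}\cdots X_n^{(i_n)})$ for any indices with $i_j=i_l\iff j,l$ lie in the same block of $\sigma$. $K^{\mathcal F}_\pi=\sum_{\sigma\le\pi}\phi^{\mathcal F}_\sigma\,\mu(\sigma,\pi)$ with $\mu$ the Möbius function of the set-partition lattice $\Pi_n$ ordered by refinement. $\pi$ has a crossing if there exist $i<j<k<l$ with $i,k$ in one block and $j,l$ in a different block. *)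

theory Defs
  imports Complex_Main "HOL-Library.Disjoint_Sets"
begin

section \<open>Complex unital algebras, encoded as a ring_1 type with a complex scalar action\<close>

definition cplx_algebra :: "(complex \<Rightarrow> 'a::ring_1 \<Rightarrow> 'a) \<Rightarrow> bool" where
  "cplx_algebra sm \<longleftrightarrow>
     (\<forall>c x y. sm c (x + y) = sm c x + sm c y) \<and>
     (\<forall>c d x. sm (c + d) x = sm c x + sm d x) \<and>
     (\<forall>c d x. sm (c * d) x = sm c (sm d x)) \<and>
     (\<forall>x. sm 1 x = x) \<and>
     (\<forall>c x y. sm c (x * y) = sm c x * y) \<and>
     (\<forall>c x y. sm c (x * y) = x * sm c y)"

definition unital_lin_functional ::
  "(complex \<Rightarrow> 'a::ring_1 \<Rightarrow> 'a) \<Rightarrow> ('a \<Rightarrow> complex) \<Rightarrow> bool" where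
  "unital_lin_functional sm f \<longleftrightarrow>
     (\<forall>x y. f (x + y) = f x + f y) \<and> (\<forall>c x. f (sm c x) = c * f x) \<and> f 1 = 1"

definition unital_alg_hom ::
  "(complex \<Rightarrow> 'a::ring_1 \<Rightarrow> 'a) \<Rightarrow> (complex \<Rightarrow> 'b::ring_1 \<Rightarrow> 'b) \<Rightarrow> ('a \<Rightarrow> 'b) \<Rightarrow> bool" where
  "unital_alg_hom smA smB h \<longleftrightarrow>
     (\<forall>x y. h (x + y) = h x + h y) \<and> (\<forall>x y. h (x * y) = h x * h y) \<and>
     (\<forall>c x. h (smA c x) = smB c (h x)) \<and> h 1 = 1"

inductive_set alg_generated ::
  "(complex \<Rightarrow> 'b::ring_1 \<Rightarrow> 'b) \<Rightarrow> 'b set \<Rightarrow> 'b set" for sm S where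
  gen_base: "x \<in> S \<Longrightarrow> x \<in> alg_generated sm S"
| gen_one: "1 \<in> alg_generated sm S"
| gen_add: "x \<in> alg_generated sm S \<Longrightarrow> y \<in> alg_generated sm S \<Longrightarrow> x + y \<in> alg_generated sm S"
| gen_mult: "x \<in> alg_generated sm S \<Longrightarrow> y \<in> alg_generated sm S \<Longrightarrow> x * y \<in> alg_generated sm S"
| gen_smul: "x \<in> alg_generated sm S \<Longrightarrow> sm c x \<in> alg_generated sm S"

text \<open>\<open>free_exch_system smA phi smU psi iota\<close>: the complex unital algebra \<open>U\<close> (type \<open>'u\<close>,
 scalar action \<open>smU\<close>) is generated by the countably many copies \<open>iota k\<close> (\<open>k \<in> nat\<close>)
 of \<open>A\<close>, and \<open>psi\<close> is the free product functional of the copies of \<open>phi\<close>: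
 \<open>psi 1 = 1\<close>, \<open>psi\<close> restricts to \<open>phi\<close> on each copy, and \<open>psi\<close> vanishes on alternating
 products of centred elements.\<close>
definition free_exch_system ::
  "(complex \<Rightarrow> 'a::ring_1 \<Rightarrow> 'a) \<Rightarrow> ('a \<Rightarrow> complex) \<Rightarrow>
   (complex \<Rightarrow> 'u::ring_1 \<Rightarrow> 'u) \<Rightarrow> ('u \<Rightarrow> complex) \<Rightarrow> (nat \<Rightarrow> 'a \<Rightarrow> 'u) \<Rightarrow> bool" where
  "free_exch_system smA phi smU psi iota \<longleftrightarrow>
     cplx_algebra smU \<and> unital_lin_functional smU psi \<and>
     (\<forall>k. unital_alg_hom smA smU (iota k)) \<and>
     alg_generated smU (\<Union>k. range (iota k)) = UNIV \<and>
     (\<forall>k a. psi (iota k a) = phi a) \<and>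
     (\<forall>ks as. ks \<noteq> [] \<longrightarrow> length as = length ks \<longrightarrow>
        (\<forall>j. Suc j < length ks \<longrightarrow> ks ! j \<noteq> ks ! Suc j) \<longrightarrow>
        (\<forall>a\<in>set as. phi a = 0) \<longrightarrow>
        psi (prod_list (map2 iota ks as)) = 0)"

definition set_partitions :: "nat \<Rightarrow> nat set set set" where
  "set_partitions n = {P. partition_on {1..n} P}"

definition refines :: "'b set set \<Rightarrow> 'b set set \<Rightarrow> bool" where
  "refines \<sigma> \<pi> \<longleftrightarrow> (\<forall>B\<in>\<sigma>. \<exists>C\<in>\<pi>. B \<subseteq> C)"

definition moebius :: "'c set \<Rightarrow> ('c \<Rightarrow> 'c \<Rightarrow> bool) \<Rightarrow> 'c \<Rightarrow> 'c \<Rightarrow> int" where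
  "moebius P le = (THE m.
     (\<forall>x y. \<not> (x \<in> P \<and> y \<in> P \<and> le x y) \<longrightarrow> m x y = 0) \<and>
     (\<forall>x\<in>P. \<forall>y\<in>P. le x y \<longrightarrow>
        (\<Sum>z\<in>{z\<in>P. le x z \<and> le z y}. m x z) = (if x = y then 1 else 0)))"

definition moebius_part :: "nat \<Rightarrow> nat set set \<Rightarrow> nat set set \<Rightarrow> int" where
  "moebius_part n = moebius (set_partitions n) refines"

definition has_crossing :: "nat set set \<Rightarrow> bool" where
  "has_crossing \<pi> \<longleftrightarrow> (\<exists>i j k l. i < j \<and> j < k \<and> k < l \<and>
      (\<exists>B\<in>\<pi>. \<exists>C\<in>\<pi>. B \<noteq> C \<and> i \<in> B \<and> k \<in> B \<and> j \<in> C \<and> l \<in> C))"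

text \<open>Index assignment realising a partition: position \<open>j\<close> gets the least element of its
 block, so \<open>i_j = i_l\<close> iff \<open>j,l\<close> lie in the same block.\<close>
definition block_index :: "nat set set \<Rightarrow> nat \<Rightarrow> nat" where
  "block_index \<sigma> j = Min (THE B. B \<in> \<sigma> \<and> j \<in> B)"

definition phiF :: "(nat \<Rightarrow> 'a \<Rightarrow> 'u::ring_1) \<Rightarrow> ('u \<Rightarrow> complex) \<Rightarrow>
    nat \<Rightarrow> nat set set \<Rightarrow> (nat \<Rightarrow> 'a) \<Rightarrow> complex" where
  "phiF iota psi n \<sigma> X = psi (prod_list (map (\<lambda>j. iota (block_index \<sigma> j) (X j)) [1..<Suc n]))"

definition KF :: "(nat \<Rightarrow> 'a \<Rightarrow> 'u::ring_1) \<Rightarrow> ('u \<Rightarrow> complex) \<Rightarrow>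
    nat \<Rightarrow> nat set set \<Rightarrow> (nat \<Rightarrow> 'a) \<Rightarrow> complex" where
  "KF iota psi n \<pi> X = (\<Sum>\<sigma>\<in>{\<sigma>\<in>set_partitions n. refines \<sigma> \<pi>}.
       phiF iota psi n \<sigma> X * of_int (moebius_part n \<sigma> \<pi>))"

end

(*
  Free cumulants kappa_B of (A, phi), indexed by finite sets B of positions, are defined by the
  moment-cumulant recursion over noncrossing partitions.  The key fact is the moment formula in
  the free product: psi(X_1^(i_1) ... X_n^(i_n)) is the sum of prod_{B in tau} kappa_B over the
  noncrossing partitions tau whose blocks are monochromatic for the colouring i.

  It is proved by induction on the length of the word.  Cut the word into maximal runs of equal
  colour.  Freeness, applied to the centred products of the runs, gives an alternating relation
  between the word and the subwords obtained by deleting runs.  The cumulant sums satisfy the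
  same relation: a noncrossing partition has a block that is an interval, a monochromatic
  interval lies in one run, and peeling off such blocks shows that some run is a union of blocks,
  so inclusion-exclusion over the isolated runs produces the relation.  All terms but the full
  word agree by induction.

  Consequently phi^F_sigma = sum of kappa_tau over noncrossing tau <= sigma, and Moebius
  inversion in the partition lattice gives K^F_pi = kappa_pi for noncrossing pi and 0 otherwise.
*)

theory Submission
  imports Defs
begin

section \<open>Moebius functions of finite posets\<close>

locale finite_poset =
  fixes P :: "'c set" and le :: "'c \<Rightarrow> 'c \<Rightarrow> bool"
  assumes finite_carrier: "finite P"
    and reflexive: "x \<in> P \<Longrightarrow> le x x"
    and transitive: "x \<in> P \<Longrightarrow> y \<in> P \<Longrightarrow> z \<in> P \<Longrightarrow> le x y \<Longrightarrow> le y z \<Longrightarrow> le x z"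
    and antisymmetric: "x \<in> P \<Longrightarrow> y \<in> P \<Longrightarrow> le x y \<Longrightarrow> le y x \<Longrightarrow> x = y"
begin

definition interval :: "'c \<Rightarrow> 'c \<Rightarrow> 'c set" where
  "interval x y = {z\<in>P. le x z \<and> le z y}"

definition less_rel :: "('c \<times> 'c) set" where
  "less_rel = {(x, y). x \<in> P \<and> y \<in> P \<and> le x y \<and> x \<noteq> y}"

lemma finite_interval [simp]: "finite (interval x y)"
  using finite_carrier by (simp add: interval_def)

lemma left_mem_interval: "x \<in> P \<Longrightarrow> le x y \<Longrightarrow> x \<in> interval x y"
  by (simp add: interval_def reflexive)

lemma right_mem_interval: "y \<in> P \<Longrightarrow> le x y \<Longrightarrow> y \<in> interval x y"
  by (simp add: interval_def reflexive)

lemma interval_same: "x \<in> P \<Longrightarrow> interval x x = {x}"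
  by (auto simp: interval_def reflexive antisymmetric)

lemma interval_restrict_left:
  "x \<in> P \<Longrightarrow> w \<in> interval x y \<Longrightarrow> {z \<in> interval x y. le w z} = interval w y"
  by (auto simp: interval_def intro: transitive)

lemma interval_restrict_right:
  "y \<in> P \<Longrightarrow> w \<in> interval x y \<Longrightarrow> {z \<in> interval x y. le z w} = interval x w"
  by (auto simp: interval_def intro: transitive)

lemma finite_less_rel: "finite less_rel"
  by (rule finite_subset[of _ "P \<times> P"]) (auto simp: less_rel_def finite_carrier)

lemma acyclic_less_rel: "acyclic less_rel"
proof -
  have "trans less_rel"
    by (rule transI) (auto simp: less_rel_def intro: transitive dest: antisymmetric)
  then show ?thesis
    by (simp add: acyclic_def trancl_id less_rel_def)
qed

lemma wf_less_rel: "wf less_rel"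
  by (rule finite_acyclic_wf[OF finite_less_rel acyclic_less_rel])

lemma wf_greater_rel: "wf (less_rel\<inverse>)"
  by (rule finite_acyclic_wf_converse[OF finite_less_rel acyclic_less_rel])

function mu :: "'c \<Rightarrow> 'c \<Rightarrow> int" where
  "mu x y = (if x \<in> P \<and> y \<in> P \<and> le x y then
     (if x = y then 1 else - (\<Sum>z\<in>interval x y - {y}. mu x z)) else 0)"
  by auto
termination
proof (relation "inv_image less_rel snd")
  show "wf (inv_image less_rel snd)"
    using wf_less_rel by simp
qed (auto simp: interval_def less_rel_def)

declare mu.simps [simp del]

definition is_moebius :: "('c \<Rightarrow> 'c \<Rightarrow> int) \<Rightarrow> bool" where
  "is_moebius m \<longleftrightarrow> (\<forall>x y. \<not> (x \<in> P \<and> y \<in> P \<and> le x y) \<longrightarrow> m x y = 0) \<and>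
     (\<forall>x\<in>P. \<forall>y\<in>P. le x y \<longrightarrow> (\<Sum>z\<in>interval x y. m x z) = (if x = y then 1 else 0))"

lemma sum_interval_split_right:
  "y \<in> P \<Longrightarrow> le x y \<Longrightarrow> (\<Sum>z\<in>interval x y. f z) = f y + (\<Sum>z\<in>interval x y - {y}. f z)"
  by (simp add: right_mem_interval sum.remove)

lemma sum_interval_split_left:
  "x \<in> P \<Longrightarrow> le x y \<Longrightarrow> (\<Sum>z\<in>interval x y. f z) = f x + (\<Sum>z\<in>interval x y - {x}. f z)"
  by (simp add: left_mem_interval sum.remove)

lemma is_moebius_mu: "is_moebius mu"
  unfolding is_moebius_def
proof (intro conjI allI impI ballI)
  fix x y
  assume "\<not> (x \<in> P \<and> y \<in> P \<and> le x y)"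
  then show "mu x y = 0"
    by (metis mu.simps)
next
  fix x y
  assume "x \<in> P" "y \<in> P" "le x y"
  then show "(\<Sum>z\<in>interval x y. mu x z) = (if x = y then 1 else 0)"
    by (simp add: sum_interval_split_right interval_same mu.simps[of x y])
qed

lemma is_moebius_unique:
  assumes m1: "is_moebius m1" and m2: "is_moebius m2"
  shows "m1 = m2"
proof (intro ext)
  fix x y
  show "m1 x y = m2 x y"
  proof (cases "x \<in> P \<and> y \<in> P \<and> le x y")
    case True
    then have "y \<in> P \<and> le x y" ..
    then show ?thesis
    proof (induction y rule: wf_induct_rule[OF wf_less_rel])
      case (1 y)
      have "m1 x z = m2 x z" if "z \<in> interval x y - {y}" for z
        using that 1 by (intro "1.IH") (auto simp: interval_def less_rel_def)
      then have "(\<Sum>z\<in>interval x y - {y}. m1 x z) = (\<Sum>z\<in>interval x y - {y}. m2 x z)"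
        by (rule sum.cong[OF refl])
      moreover have "(\<Sum>z\<in>interval x y. m1 x z) = (\<Sum>z\<in>interval x y. m2 x z)"
        using m1 m2 1 True by (simp add: is_moebius_def)
      ultimately show ?case
        using 1 by (simp add: sum_interval_split_right)
    qed
  next
    case False
    then show ?thesis
      using m1 m2 by (simp add: is_moebius_def)
  qed
qed

lemma moebius_eq_mu: "moebius P le = mu"
proof -
  have "moebius P le = (THE m. is_moebius m)"
    by (simp add: moebius_def is_moebius_def interval_def)
  also have "\<dots> = mu"
    using is_moebius_mu is_moebius_unique by blast
  finally show ?thesis .
qed

lemma mu_same: "x \<in> P \<Longrightarrow> mu x x = 1"
  by (simp add: mu.simps[of x x] reflexive)

lemma mu_sum_right:
  "x \<in> P \<Longrightarrow> y \<in> P \<Longrightarrow> le x y \<Longrightarrow> (\<Sum>z\<in>interval x y. mu x z) = (if x = y then 1 else 0)"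
  using is_moebius_mu by (simp add: is_moebius_def)

lemma mu_convolution:
  assumes "a \<in> P" "y \<in> P" "le a y"
  shows "(\<Sum>w\<in>interval a y. mu a w * (\<Sum>z\<in>interval w y. mu z y)) = mu a y"
proof -
  have "(\<Sum>w\<in>interval a y. mu a w * (\<Sum>z\<in>interval w y. mu z y))
      = (\<Sum>w\<in>interval a y. \<Sum>z\<in>{z\<in>interval a y. le w z}. mu a w * mu z y)"
    using assms by (simp add: interval_restrict_left sum_distrib_left)
  also have "\<dots> = (\<Sum>z\<in>interval a y. \<Sum>w\<in>{w\<in>interval a y. le w z}. mu a w * mu z y)"
    by (rule sum.swap_restrict) simp_all
  also have "\<dots> = (\<Sum>z\<in>interval a y. mu z y * (\<Sum>w\<in>interval a z. mu a w))"
    using assms by (simp add: interval_restrict_right sum_distrib_left mult.commute)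
  also have "\<dots> = (\<Sum>z\<in>interval a y. if z = a then mu z y else 0)"
  proof (rule sum.cong[OF refl])
    fix z
    assume "z \<in> interval a y"
    then have "z \<in> P" "le a z"
      by (simp_all add: interval_def)
    then show "mu z y * (\<Sum>w\<in>interval a z. mu a w) = (if z = a then mu z y else 0)"
      using mu_sum_right[OF \<open>a \<in> P\<close>] by simp
  qed
  also have "\<dots> = mu a y"
    using assms by (simp add: left_mem_interval)
  finally show ?thesis .
qed

lemma mu_sum_left:
  assumes "x \<in> P" "y \<in> P" "le x y"
  shows "(\<Sum>z\<in>interval x y. mu z y) = (if x = y then 1 else 0)"
proof -
  \<comment> \<open>\<open>E\<close> measures the failure of the claim; \<open>\<Sum>\<^sub>w \<mu>(a, w) E(w) = 0\<close> together with
    \<open>\<mu>(a, a) = 1\<close> forces \<open>E a = 0\<close> by downward induction on \<open>a\<close>\<close>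
  define E where "E w = (\<Sum>z\<in>interval w y. mu z y) - (if w = y then 1 else 0)" for w
  have "E a = 0" if "a \<in> P \<and> le a y" for a
    using that
  proof (induction a rule: wf_induct_rule[OF wf_greater_rel])
    case (1 a)
    have "(\<Sum>w\<in>interval a y. mu a w * E w) = 0"
      using 1 assms by (simp add: E_def right_diff_distrib sum_subtractf mu_convolution
          right_mem_interval if_distrib[of "(*) (mu a _)"] cong: if_cong)
    moreover have "E w = 0" if "w \<in> interval a y - {a}" for w
      using that 1 by (intro "1.IH") (auto simp: interval_def less_rel_def)
    ultimately show ?case
      using 1 by (simp add: sum_interval_split_left mu_same)
  qed
  then show ?thesis
    using assms by (simp add: E_def)
qed

lemma moebius_inversion:
  fixes f w :: "'c \<Rightarrow> 'r::comm_ring_1"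
  assumes "N \<subseteq> P" "y \<in> P"
    and f: "\<And>x. x \<in> P \<Longrightarrow> f x = (\<Sum>z\<in>{z\<in>N. le z x}. w z)"
  shows "(\<Sum>x\<in>{x\<in>P. le x y}. f x * of_int (moebius P le x y)) = (if y \<in> N then w y else 0)"
proof -
  have inner: "(\<Sum>x\<in>{x\<in>P. le z x \<and> le x y}. mu x y) = (if z = y then 1 else 0)" if "z \<in> N" for z
  proof (cases "le z y")
    case True
    then show ?thesis
      using mu_sum_left[of z y] that assms by (auto simp: interval_def)
  next
    case False
    then have empty: "{x\<in>P. le z x \<and> le x y} = {}"
      using that assms transitive by blast
    have "z \<noteq> y"
      using False assms(2) reflexive by auto
    then show ?thesis
      unfolding empty by simp
  qed
  have "(\<Sum>x\<in>{x\<in>P. le x y}. f x * of_int (mu x y))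
      = (\<Sum>x\<in>{x\<in>P. le x y}. \<Sum>z\<in>{z\<in>N. le z x}. w z * of_int (mu x y))"
    using f by (simp add: sum_distrib_right)
  also have "\<dots> = (\<Sum>z\<in>N. \<Sum>x\<in>{x\<in>{x\<in>P. le x y}. le z x}. w z * of_int (mu x y))"
    using finite_carrier assms(1) by (intro sum.swap_restrict) (auto intro: finite_subset)
  also have "\<dots> = (\<Sum>z\<in>N. w z * of_int (\<Sum>x\<in>{x\<in>P. le z x \<and> le x y}. mu x y))"
    by (simp add: sum_distrib_left conj_ac)
  also have "\<dots> = (\<Sum>z\<in>N. if z = y then w z else 0)"
    by (rule sum.cong) (simp_all add: inner)
  also have "\<dots> = (if y \<in> N then w y else 0)"
    using finite_carrier assms(1) by (simp add: finite_subset)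
  finally show ?thesis
    by (simp add: moebius_eq_mu)
qed

end

section \<open>Noncrossing partitions\<close>

definition noncrossing_partitions :: "nat set \<Rightarrow> nat set set set" where
  "noncrossing_partitions Q = {\<tau>. partition_on Q \<tau> \<and> \<not> has_crossing \<tau>}"

definition order_convex :: "nat set \<Rightarrow> nat set \<Rightarrow> bool" where
  "order_convex Q R \<longleftrightarrow> (\<forall>x\<in>R. \<forall>y\<in>R. \<forall>q\<in>Q. x \<le> q \<and> q \<le> y \<longrightarrow> q \<in> R)"

definition isolates :: "nat set set \<Rightarrow> nat set \<Rightarrow> bool" where
  "isolates \<tau> R \<longleftrightarrow> (\<forall>B\<in>\<tau>. B \<subseteq> R \<or> B \<inter> R = {})"

lemma has_crossingI:
  assumes "a < b" "b < c" "c < d" "B \<in> \<tau>" "C \<in> \<tau>" "B \<noteq> C" "a \<in> B" "c \<in> B" "b \<in> C" "d \<in> C"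
  shows "has_crossing \<tau>"
  unfolding has_crossing_def using assms by blast

lemma has_crossingE:
  assumes "has_crossing \<tau>"
  obtains a b c d B C where "a < b" "b < c" "c < d" "B \<in> \<tau>" "C \<in> \<tau>" "B \<noteq> C"
    "a \<in> B" "c \<in> B" "b \<in> C" "d \<in> C"
  using assms unfolding has_crossing_def by blast

lemma order_convexD:
  "order_convex Q R \<Longrightarrow> x \<in> R \<Longrightarrow> y \<in> R \<Longrightarrow> q \<in> Q \<Longrightarrow> x \<le> q \<Longrightarrow> q \<le> y \<Longrightarrow> q \<in> R"
  unfolding order_convex_def by blast

lemma has_crossing_mono: "has_crossing \<sigma> \<Longrightarrow> \<sigma> \<subseteq> \<tau> \<Longrightarrow> has_crossing \<tau>"
  by (elim has_crossingE) (blast intro: has_crossingI)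

lemma partition_on_block_disjoint:
  "partition_on Q \<tau> \<Longrightarrow> B \<in> \<tau> \<Longrightarrow> C \<in> \<tau> \<Longrightarrow> B \<noteq> C \<Longrightarrow> B \<inter> C = {}"
  unfolding partition_on_def disjoint_def by blast

lemma partition_on_cover: "partition_on A \<sigma> \<Longrightarrow> x \<in> A \<Longrightarrow> \<exists>C\<in>\<sigma>. x \<in> C"
  by (auto simp: partition_on_def)

lemma partition_on_block_finite: "partition_on A \<sigma> \<Longrightarrow> finite A \<Longrightarrow> C \<in> \<sigma> \<Longrightarrow> finite C"
  by (auto simp: partition_on_def intro: finite_subset)

lemma noncrossing_partitionsD:
  assumes "\<tau> \<in> noncrossing_partitions Q"
  shows "partition_on Q \<tau>" "\<not> has_crossing \<tau>"
    and "B \<in> \<tau> \<Longrightarrow> B \<subseteq> Q" "B \<in> \<tau> \<Longrightarrow> B \<noteq> {}"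
    and "q \<in> Q \<Longrightarrow> \<exists>B\<in>\<tau>. q \<in> B"
    and "B \<in> \<tau> \<Longrightarrow> C \<in> \<tau> \<Longrightarrow> B \<noteq> C \<Longrightarrow> B \<inter> C = {}"
  using assms partition_on_block_disjoint
  by (auto simp: noncrossing_partitions_def partition_on_def)

lemma finite_noncrossing_partitions: "finite Q \<Longrightarrow> finite (noncrossing_partitions Q)"
  by (rule finite_subset[OF _ finitely_many_partition_on]) (auto simp: noncrossing_partitions_def)

lemma finite_noncrossing_partition:
  "finite Q \<Longrightarrow> \<tau> \<in> noncrossing_partitions Q \<Longrightarrow> finite \<tau>"
  using finite_elements noncrossing_partitionsD(1) by blast

lemma noncrossing_partitions_empty [simp]: "noncrossing_partitions {} = {{}}"
  by (auto simp: noncrossing_partitions_def partition_on_empty has_crossing_def)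

lemma singleton_noncrossing_partition: "Q \<noteq> {} \<Longrightarrow> {Q} \<in> noncrossing_partitions Q"
  by (auto simp: noncrossing_partitions_def partition_on_space has_crossing_def)

lemma noncrossing_partition_block_psubset:
  assumes "\<tau> \<in> noncrossing_partitions Q" "\<tau> \<noteq> {Q}" "B \<in> \<tau>"
  shows "B \<subset> Q"
proof -
  note D = noncrossing_partitionsD[OF assms(1)]
  have "C = B" if "B = Q" "C \<in> \<tau>" for C
    using that D(3,4,6)[of C] assms(3) by blast
  then have "B \<noteq> Q"
    using assms(2,3) by blast
  then show ?thesis
    using D(3) assms(3) by blast
qed

lemma noncrossing_partition_subset:
  assumes "\<tau> \<in> noncrossing_partitions Q" "\<sigma> \<subseteq> \<tau>"
  shows "\<sigma> \<in> noncrossing_partitions (\<Union>\<sigma>)"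
proof -
  have "partition_on (\<Union>\<sigma>) \<sigma>"
  proof (rule partition_onI)
    show "disjnt B C" if "B \<in> \<sigma>" "C \<in> \<sigma>" "B \<noteq> C" for B C
      using that assms(2) noncrossing_partitionsD(6)[OF assms(1)] unfolding disjnt_def by blast
    show "{} \<notin> \<sigma>"
      using assms(2) noncrossing_partitionsD(4)[OF assms(1)] by blast
  qed simp
  moreover have "\<not> has_crossing \<sigma>"
    using assms noncrossing_partitionsD(2) has_crossing_mono by blast
  ultimately show ?thesis
    by (simp add: noncrossing_partitions_def)
qed

lemma noncrossing_partition_Diff_block:
  assumes "\<tau> \<in> noncrossing_partitions Q" "B \<in> \<tau>"
  shows "\<tau> - {B} \<in> noncrossing_partitions (Q - B)"
proof -
  note D = noncrossing_partitionsD[OF assms(1)]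
  have "\<Union>(\<tau> - {B}) \<subseteq> Q - B"
    using D(3,6) assms(2) by blast
  moreover have "Q - B \<subseteq> \<Union>(\<tau> - {B})"
    using D(5) by blast
  ultimately have "\<Union>(\<tau> - {B}) = Q - B" ..
  then show ?thesis
    using noncrossing_partition_subset[OF assms(1), of "\<tau> - {B}"] by simp
qed

lemma noncrossing_partition_isolated_parts:
  assumes "\<tau> \<in> noncrossing_partitions Q" "isolates \<tau> R" "R \<subseteq> Q"
  shows "{B\<in>\<tau>. B \<subseteq> R} \<in> noncrossing_partitions R"
    and "{B\<in>\<tau>. B \<inter> R = {}} \<in> noncrossing_partitions (Q - R)"
proof -
  note D = noncrossing_partitionsD[OF assms(1)]
  have covered: "\<exists>B\<in>\<tau>. x \<in> B \<and> (B \<subseteq> R \<or> B \<inter> R = {})" if "x \<in> Q" for x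
    using D(5)[OF that] assms(2) unfolding isolates_def by blast
  have "\<Union>{B\<in>\<tau>. B \<subseteq> R} = R"
    using covered assms(3) by blast
  then show "{B\<in>\<tau>. B \<subseteq> R} \<in> noncrossing_partitions R"
    using noncrossing_partition_subset[OF assms(1), of "{B\<in>\<tau>. B \<subseteq> R}"] by simp
  have "\<Union>{B\<in>\<tau>. B \<inter> R = {}} = Q - R"
    using covered D(3) by blast
  then show "{B\<in>\<tau>. B \<inter> R = {}} \<in> noncrossing_partitions (Q - R)"
    using noncrossing_partition_subset[OF assms(1), of "{B\<in>\<tau>. B \<inter> R = {}}"] by simp
qed

lemma isolates_Diff_block:
  assumes "isolates (\<tau> - {B}) (S - B)" "B \<subseteq> S \<or> B \<inter> S = {}"
    and "\<And>C. C \<in> \<tau> \<Longrightarrow> C \<noteq> B \<Longrightarrow> C \<inter> B = {}"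
  shows "isolates \<tau> S"
  using assms unfolding isolates_def by blast

lemma not_has_crossing_Un:
  assumes "\<not> has_crossing \<tau>1" "\<not> has_crossing \<tau>2"
    and inside: "\<And>B. B \<in> \<tau>1 \<Longrightarrow> B \<subseteq> R" and outside: "\<And>C. C \<in> \<tau>2 \<Longrightarrow> C \<subseteq> Q - R"
    and convex: "order_convex Q R"
  shows "\<not> has_crossing (\<tau>1 \<union> \<tau>2)"
proof
  assume "has_crossing (\<tau>1 \<union> \<tau>2)"
  then obtain a b c d B C where abcd: "a < b" "b < c" "c < d"
    and BC: "B \<in> \<tau>1 \<union> \<tau>2" "C \<in> \<tau>1 \<union> \<tau>2" "B \<noteq> C" "a \<in> B" "c \<in> B" "b \<in> C" "d \<in> C"
    by (rule has_crossingE)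
  have "\<not> (B \<in> \<tau>1 \<and> C \<in> \<tau>1)" "\<not> (B \<in> \<tau>2 \<and> C \<in> \<tau>2)"
    using has_crossingI[OF abcd _ _ BC(3-7)] assms(1,2) by blast+
  \<comment> \<open>a block inside \<open>R\<close> and one outside cannot interleave, since \<open>R\<close> is convex in \<open>Q\<close>\<close>
  moreover have "\<not> (B \<in> \<tau>1 \<and> C \<in> \<tau>2)"
    using order_convexD[OF convex, of a c b] abcd BC(4-6) inside[of B] outside[of C] by auto
  moreover have "\<not> (B \<in> \<tau>2 \<and> C \<in> \<tau>1)"
    using order_convexD[OF convex, of b d c] abcd BC(5-7) inside[of C] outside[of B] by auto
  ultimately show False
    using BC(1,2) by blast
qed

lemma noncrossing_partition_Un:
  assumes \<tau>1: "\<tau>1 \<in> noncrossing_partitions R" and \<tau>2: "\<tau>2 \<in> noncrossing_partitions (Q - R)"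
    and "R \<subseteq> Q" and "order_convex Q R"
  shows "\<tau>1 \<union> \<tau>2 \<in> noncrossing_partitions Q"
proof -
  note D1 = noncrossing_partitionsD[OF \<tau>1] and D2 = noncrossing_partitionsD[OF \<tau>2]
  have "partition_on Q (\<tau>1 \<union> \<tau>2)"
  proof (rule partition_onI)
    show "\<Union>(\<tau>1 \<union> \<tau>2) = Q"
      using partition_onD1[OF D1(1)] partition_onD1[OF D2(1)] \<open>R \<subseteq> Q\<close> by auto
    show "disjnt B C" if "B \<in> \<tau>1 \<union> \<tau>2" "C \<in> \<tau>1 \<union> \<tau>2" "B \<noteq> C" for B C
      using that D1(3,6) D2(3,6) unfolding disjnt_def by blast
    show "{} \<notin> \<tau>1 \<union> \<tau>2"
      using D1(4) D2(4) by blast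
  qed
  moreover have "\<not> has_crossing (\<tau>1 \<union> \<tau>2)"
    using not_has_crossing_Un[OF D1(2) D2(2) D1(3) D2(3) \<open>order_convex Q R\<close>] .
  ultimately show ?thesis
    by (simp add: noncrossing_partitions_def)
qed

lemma noncrossing_partition_nested_block:
  assumes \<tau>: "\<tau> \<in> noncrossing_partitions Q" and "B \<in> \<tau>" "C \<in> \<tau>" "B \<noteq> C"
    and "x \<in> B" "y \<in> B" "q \<in> C" "x < q" "q < y" "c \<in> C"
  shows "x < c \<and> c < y"
proof -
  note D = noncrossing_partitionsD[OF \<tau>]
  have "\<not> c < x"
    using has_crossingI[of c x q y C \<tau> B] assms D(2) by blast
  moreover have "\<not> y < c"
    using has_crossingI[of x q y c B \<tau> C] assms D(2) by blast
  moreover have "c \<noteq> x" "c \<noteq> y"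
    using D(6)[OF assms(2-4)] assms(5,6,10) by blast+
  ultimately show ?thesis
    by linarith
qed

lemma noncrossing_partition_has_convex_block:
  assumes \<tau>: "\<tau> \<in> noncrossing_partitions Q" and "finite Q" "Q \<noteq> {}"
  shows "\<exists>B\<in>\<tau>. order_convex Q B"
proof -
  note D = noncrossing_partitionsD[OF \<tau>]
  define span where "span B = Max B - Min B" for B :: "nat set"
  have "finite \<tau>" "\<tau> \<noteq> {}"
    using assms D(5) finite_noncrossing_partition by blast+
  then obtain B where B: "B \<in> \<tau>" and B_min: "\<And>C. C \<in> \<tau> \<Longrightarrow> span B \<le> span C"
    using ex_min_if_finite[of "span ` \<tau>"] by (metis (no_types, lifting) arg_min_if_finite(1,2) not_le)
  have finite_block: "finite C" "C \<noteq> {}" if "C \<in> \<tau>" for C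
    using that D(3,4) \<open>finite Q\<close> finite_subset by blast+
  \<comment> \<open>a block of minimal span is convex: a block nested inside it would have smaller span\<close>
  have "order_convex Q B"
    unfolding order_convex_def
  proof (intro ballI impI)
    fix x y q
    assume "x \<in> B" "y \<in> B" "q \<in> Q" "x \<le> q \<and> q \<le> y"
    show "q \<in> B"
    proof (rule ccontr)
      assume "q \<notin> B"
      then have "x < q" "q < y"
        using \<open>x \<le> q \<and> q \<le> y\<close> \<open>x \<in> B\<close> \<open>y \<in> B\<close> by (auto simp: le_less)
      obtain C where C: "C \<in> \<tau>" "q \<in> C" "C \<noteq> B"
        using D(5) \<open>q \<in> Q\<close> \<open>q \<notin> B\<close> by blast
      have "x < c \<and> c < y" if "c \<in> C" for c
        using noncrossing_partition_nested_block[OF \<tau> B C(1) C(3)[symmetric]] \<open>x \<in> B\<close> \<open>y \<in> B\<close>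
          C(2) \<open>x < q\<close> \<open>q < y\<close> that by blast
      then have "x < Min C" "Max C < y" "Min C \<le> Max C"
        using finite_block[OF C(1)] by simp_all
      moreover have "Min B \<le> x" "y \<le> Max B"
        using finite_block[OF B] \<open>x \<in> B\<close> \<open>y \<in> B\<close> by simp_all
      ultimately have "span C < span B"
        unfolding span_def by linarith
      then show False
        using B_min[OF C(1)] by simp
    qed
  qed
  then show ?thesis
    using B by blast
qed

definition noncrossing_sum :: "(nat set \<Rightarrow> 'b::comm_ring_1) \<Rightarrow> nat set \<Rightarrow> 'b" where
  "noncrossing_sum w Q = (\<Sum>\<tau>\<in>noncrossing_partitions Q. \<Prod>B\<in>\<tau>. w B)"

lemma bij_betw_Un_isolated_parts:
  assumes "R \<subseteq> Q" "order_convex Q R"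
  shows "bij_betw (\<lambda>p. fst p \<union> snd p)
    (noncrossing_partitions R \<times> {\<tau>\<in>noncrossing_partitions (Q - R). Pr \<tau>})
    {\<tau>\<in>noncrossing_partitions Q. isolates \<tau> R \<and> Pr {B\<in>\<tau>. B \<inter> R = {}}}"
proof -
  define parts where "parts \<tau> = ({B\<in>\<tau>. B \<subseteq> R}, {B\<in>\<tau>. B \<inter> R = {}})" for \<tau> :: "nat set set"
  have parts_Un: "parts (\<tau>1 \<union> \<tau>2) = (\<tau>1, \<tau>2)"
    if "\<tau>1 \<in> noncrossing_partitions R" "\<tau>2 \<in> noncrossing_partitions (Q - R)" for \<tau>1 \<tau>2
  proof -
    have "B \<subseteq> R" "B \<inter> R \<noteq> {}" if "B \<in> \<tau>1" for B
      using that noncrossing_partitionsD(3,4)[OF \<open>\<tau>1 \<in> _\<close>] by blast+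
    moreover have "\<not> B \<subseteq> R" "B \<inter> R = {}" if "B \<in> \<tau>2" for B
      using that noncrossing_partitionsD(3,4)[OF \<open>\<tau>2 \<in> _\<close>] by blast+
    ultimately show ?thesis
      unfolding parts_def by blast
  qed
  let ?A = "noncrossing_partitions R \<times> {\<tau>\<in>noncrossing_partitions (Q - R). Pr \<tau>}"
  let ?A' = "{\<tau>\<in>noncrossing_partitions Q. isolates \<tau> R \<and> Pr {B\<in>\<tau>. B \<inter> R = {}}}"
  have "parts (fst p \<union> snd p) = p" "fst p \<union> snd p \<in> ?A'" if p: "p \<in> ?A" for p
  proof -
    have \<tau>: "fst p \<in> noncrossing_partitions R" "snd p \<in> noncrossing_partitions (Q - R)" "Pr (snd p)"
      using p by auto
    show "parts (fst p \<union> snd p) = p"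
      using parts_Un[OF \<tau>(1,2)] by simp
    have "fst p \<union> snd p \<in> noncrossing_partitions Q"
      using noncrossing_partition_Un[OF \<tau>(1,2) assms] .
    moreover have "isolates (fst p \<union> snd p) R"
      using noncrossing_partitionsD(3)[OF \<tau>(1)] noncrossing_partitionsD(3)[OF \<tau>(2)]
      unfolding isolates_def by auto
    moreover have "{B \<in> fst p \<union> snd p. B \<inter> R = {}} = snd p"
      using parts_Un[OF \<tau>(1,2)] by (simp add: parts_def prod_eq_iff)
    ultimately show "fst p \<union> snd p \<in> ?A'"
      using \<tau>(3) by simp
  qed
  moreover have "fst (parts \<tau>) \<union> snd (parts \<tau>) = \<tau>" "parts \<tau> \<in> ?A" if \<tau>: "\<tau> \<in> ?A'" for \<tau>
  proof -
    show "fst (parts \<tau>) \<union> snd (parts \<tau>) = \<tau>"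
      using \<tau> unfolding parts_def isolates_def by auto
    show "parts \<tau> \<in> ?A"
      using \<tau> noncrossing_partition_isolated_parts[of \<tau> Q R] assms(1) by (simp add: parts_def)
  qed
  ultimately show ?thesis
    by (intro bij_betw_byWitness[where f' = parts] ballI image_subsetI)
qed

lemma sum_noncrossing_isolating:
  fixes w :: "nat set \<Rightarrow> 'b::comm_ring_1"
  assumes "finite Q" "R \<subseteq> Q" "order_convex Q R"
  shows "(\<Sum>\<tau>\<in>{\<tau>\<in>noncrossing_partitions Q. isolates \<tau> R \<and> Pr {B\<in>\<tau>. B \<inter> R = {}}}. \<Prod>B\<in>\<tau>. w B)
    = noncrossing_sum w R * (\<Sum>\<tau>\<in>{\<tau>\<in>noncrossing_partitions (Q - R). Pr \<tau>}. \<Prod>B\<in>\<tau>. w B)"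
proof -
  have prod_Un: "(\<Prod>B\<in>fst p \<union> snd p. w B) = (\<Prod>B\<in>fst p. w B) * (\<Prod>B\<in>snd p. w B)"
    if "p \<in> noncrossing_partitions R \<times> {\<tau>\<in>noncrossing_partitions (Q - R). Pr \<tau>}" for p
  proof (rule prod.union_disjoint)
    have p: "fst p \<in> noncrossing_partitions R" "snd p \<in> noncrossing_partitions (Q - R)"
      using that by auto
    show "finite (fst p)" "finite (snd p)"
      using finite_noncrossing_partition p assms(1,2) finite_subset by blast+
    show "fst p \<inter> snd p = {}"
      using noncrossing_partitionsD(3,4)[OF p(1)] noncrossing_partitionsD(3)[OF p(2)] by blast
  qed
  have "(\<Sum>\<tau>\<in>{\<tau>\<in>noncrossing_partitions Q. isolates \<tau> R \<and> Pr {B\<in>\<tau>. B \<inter> R = {}}}. \<Prod>B\<in>\<tau>. w B)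
      = (\<Sum>p\<in>noncrossing_partitions R \<times> {\<tau>\<in>noncrossing_partitions (Q - R). Pr \<tau>}.
           \<Prod>B\<in>fst p \<union> snd p. w B)"
    by (rule sum.reindex_bij_betw[OF bij_betw_Un_isolated_parts[OF assms(2,3)], symmetric])
  also have "\<dots> = (\<Sum>p\<in>noncrossing_partitions R \<times> {\<tau>\<in>noncrossing_partitions (Q - R). Pr \<tau>}.
           (\<Prod>B\<in>fst p. w B) * (\<Prod>B\<in>snd p. w B))"
    using prod_Un by (rule sum.cong[OF refl])
  also have "\<dots> = noncrossing_sum w R *
      (\<Sum>\<tau>\<in>{\<tau>\<in>noncrossing_partitions (Q - R). Pr \<tau>}. \<Prod>B\<in>\<tau>. w B)"
    by (simp add: noncrossing_sum_def sum_product sum.cartesian_product case_prod_beta)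
  finally show ?thesis .
qed

section \<open>Free cumulants\<close>

definition moment :: "('a::monoid_mult \<Rightarrow> 'b) \<Rightarrow> (nat \<Rightarrow> 'a) \<Rightarrow> nat set \<Rightarrow> 'b" where
  "moment phi X Q = phi (prod_list (map X (sorted_list_of_set Q)))"

function free_cumulant :: "('a::monoid_mult \<Rightarrow> 'b::comm_ring_1) \<Rightarrow> (nat \<Rightarrow> 'a) \<Rightarrow> nat set \<Rightarrow> 'b" where
  "free_cumulant phi X Q = (if finite Q then moment phi X Q
     - (\<Sum>\<tau>\<in>noncrossing_partitions Q - {{Q}}. \<Prod>B\<in>\<tau>. free_cumulant phi X B) else 0)"
  by auto
termination
proof (relation "measure (\<lambda>(phi, X, Q). card Q)")
  fix phi :: "'a \<Rightarrow> 'b" and X :: "nat \<Rightarrow> 'a" and Q \<tau> B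
  assume "finite Q" "\<tau> \<in> noncrossing_partitions Q - {{Q}}" "B \<in> \<tau>"
  then show "((phi, X, B), phi, X, Q) \<in> measure (\<lambda>(phi, X, Q). card Q)"
    using noncrossing_partition_block_psubset psubset_card_mono by fastforce
qed simp

declare free_cumulant.simps [simp del]

lemma moment_cumulant:
  assumes "finite Q" "phi 1 = 1"
  shows "moment phi X Q = noncrossing_sum (free_cumulant phi X) Q"
proof (cases "Q = {}")
  case True
  then show ?thesis
    using assms by (simp add: moment_def noncrossing_sum_def)
next
  case False
  then have "noncrossing_sum (free_cumulant phi X) Q
      = free_cumulant phi X Q + (\<Sum>\<tau>\<in>noncrossing_partitions Q - {{Q}}. \<Prod>B\<in>\<tau>. free_cumulant phi X B)"
    using finite_noncrossing_partitions[OF assms(1)] singleton_noncrossing_partition[OF False]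
    by (simp add: noncrossing_sum_def sum.remove)
  then show ?thesis
    using assms(1) free_cumulant.simps[of phi X Q] by simp
qed

section \<open>Runs of a colouring\<close>

definition monochromatic :: "(nat \<Rightarrow> 'k) \<Rightarrow> nat set set \<Rightarrow> bool" where
  "monochromatic i \<tau> \<longleftrightarrow> (\<forall>B\<in>\<tau>. \<forall>x\<in>B. \<forall>y\<in>B. i x = i y)"

locale colour_runs =
  fixes i :: "nat \<Rightarrow> 'k" and R :: "nat \<Rightarrow> nat set" and m :: nat
  assumes run_nonempty: "t < m \<Longrightarrow> R t \<noteq> {}"
    and run_finite: "t < m \<Longrightarrow> finite (R t)"
    and run_monochromatic: "t < m \<Longrightarrow> x \<in> R t \<Longrightarrow> y \<in> R t \<Longrightarrow> i x = i y"
    and run_less: "t < t' \<Longrightarrow> t' < m \<Longrightarrow> x \<in> R t \<Longrightarrow> y \<in> R t' \<Longrightarrow> x < y"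
    and run_colour_change: "Suc t < m \<Longrightarrow> x \<in> R t \<Longrightarrow> y \<in> R (Suc t) \<Longrightarrow> i x \<noteq> i y"
begin

lemma runs_disjoint: "t < m \<Longrightarrow> s < m \<Longrightarrow> t \<noteq> s \<Longrightarrow> R t \<inter> R s = {}"
  using run_less by (metis disjoint_iff less_irrefl linorder_neqE_nat)

lemma finite_Union_runs: "W \<subseteq> {..<m} \<Longrightarrow> finite (\<Union>t\<in>W. R t)"
  using run_finite by (auto intro: finite_subset[of W "{..<m}"])

lemma Union_runs_Diff:
  assumes "W \<subseteq> {..<m}" "t \<in> W"
  shows "(\<Union>s\<in>W. R s) - R t = (\<Union>s\<in>W - {t}. R s)"
  using assms runs_disjoint by blast

lemma order_convex_run:
  assumes "W \<subseteq> {..<m}" "t \<in> W"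
  shows "order_convex (\<Union>s\<in>W. R s) (R t)"
  unfolding order_convex_def
proof (intro ballI impI)
  fix x y q
  assume "x \<in> R t" "y \<in> R t" "q \<in> (\<Union>s\<in>W. R s)" "x \<le> q \<and> q \<le> y"
  then obtain s where "s \<in> W" "q \<in> R s"
    by blast
  then have "\<not> s < t" "\<not> t < s"
    using assms run_less[of s t q x] run_less[of t s y q] \<open>x \<in> R t\<close> \<open>y \<in> R t\<close> \<open>x \<le> q \<and> q \<le> y\<close>
    by auto
  then show "q \<in> R t"
    using \<open>q \<in> R s\<close> by (metis linorder_neqE_nat)
qed

definition run_colour :: "nat \<Rightarrow> 'k" where
  "run_colour t = i (Min (R t))"

lemma colour_eq_run_colour: "t < m \<Longrightarrow> x \<in> R t \<Longrightarrow> i x = run_colour t"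
  unfolding run_colour_def using run_monochromatic Min_in run_finite run_nonempty by blast

lemma run_colour_neq_Suc: "Suc t < m \<Longrightarrow> run_colour t \<noteq> run_colour (Suc t)"
  unfolding run_colour_def using run_colour_change Min_in run_finite run_nonempty
  by (metis Suc_lessD)

lemma set_sorted_list_of_run: "t < m \<Longrightarrow> set (sorted_list_of_set (R t)) = R t"
  using run_finite by simp

lemma sorted_list_of_Union_runs:
  assumes "W \<subseteq> {..<m}"
  shows "sorted_list_of_set (\<Union>t\<in>W. R t)
    = concat (map (\<lambda>t. sorted_list_of_set (R t)) (filter (\<lambda>t. t \<in> W) [0..<m]))"
proof (rule strict_sorted_equal[symmetric])
  have sorted_concat: "sorted_wrt (<) (concat (map (\<lambda>t. sorted_list_of_set (R t)) ts))"
    if "sorted_wrt (<) ts" "set ts \<subseteq> {..<m}" for ts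
    using that
  proof (induction ts)
    case (Cons t ts)
    have "x < y" if "x \<in> R t" "t' \<in> set ts" "y \<in> R t'" for x y t'
      using Cons.prems that run_less[of t t' x y] by auto
    then show ?case
      using Cons by (auto simp: sorted_wrt_append set_sorted_list_of_run subset_iff)
  qed simp
  show "sorted_wrt (<) (concat (map (\<lambda>t. sorted_list_of_set (R t)) (filter (\<lambda>t. t \<in> W) [0..<m])))"
    by (rule sorted_concat) (auto intro: sorted_wrt_filter)
  show "set (concat (map (\<lambda>t. sorted_list_of_set (R t)) (filter (\<lambda>t. t \<in> W) [0..<m])))
      = set (sorted_list_of_set (\<Union>t\<in>W. R t))"
    using assms finite_Union_runs[OF assms] by (auto simp: set_sorted_list_of_run subset_iff)
qed (use finite_Union_runs[OF assms] in simp)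

lemma colour_runs_extend_last:
  assumes "0 < m" "\<And>x. x \<in> (\<Union>t<m. R t) \<Longrightarrow> x < b" "a \<in> R (m - 1)" "i a = i b"
  shows "colour_runs i (R(m - 1 := insert b (R (m - 1)))) m"
proof
  fix s s' x y
  show "s < m \<Longrightarrow> (R(m - 1 := insert b (R (m - 1)))) s \<noteq> {}"
    using run_nonempty by simp
  show "s < m \<Longrightarrow> finite ((R(m - 1 := insert b (R (m - 1)))) s)"
    using run_finite by simp
  show "i x = i y" if "s < m" "x \<in> (R(m - 1 := insert b (R (m - 1)))) s"
    "y \<in> (R(m - 1 := insert b (R (m - 1)))) s"
  proof (cases "s = m - 1")
    case True
    have colour: "i z = i b" if "z \<in> insert b (R (m - 1))" for z
      using that run_monochromatic[of "m - 1" z a] assms(1,3,4) by auto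
    have "x \<in> insert b (R (m - 1))" "y \<in> insert b (R (m - 1))"
      using True that by simp_all
    then show ?thesis
      using colour by metis
  next
    case False
    then show ?thesis
      using that run_monochromatic[of s x y] by simp
  qed
  show "x < y" if "s < s'" "s' < m" "x \<in> (R(m - 1 := insert b (R (m - 1)))) s"
    "y \<in> (R(m - 1 := insert b (R (m - 1)))) s'"
  proof -
    have "x \<in> R s" "s < m"
      using that by (auto split: if_splits)
    then have "x < b"
      using assms(2) by blast
    then show ?thesis
      using that \<open>x \<in> R s\<close> run_less[of s s' x y] by (auto split: if_splits)
  qed
  show "i x \<noteq> i y" if "Suc s < m" "x \<in> (R(m - 1 := insert b (R (m - 1)))) s"
    "y \<in> (R(m - 1 := insert b (R (m - 1)))) (Suc s)"
    using that assms(3,4) run_colour_change[of s x y] run_colour_change[of s x a]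
    by (auto split: if_splits)
qed

lemma colour_runs_new_run:
  assumes "\<And>x. x \<in> (\<Union>t<m. R t) \<Longrightarrow> x < b" "\<And>x. 0 < m \<Longrightarrow> x \<in> R (m - 1) \<Longrightarrow> i x \<noteq> i b"
  shows "colour_runs i (R(m := {b})) (Suc m)"
proof
  fix s s' x y
  show "s < Suc m \<Longrightarrow> (R(m := {b})) s \<noteq> {}"
    using run_nonempty by simp
  show "s < Suc m \<Longrightarrow> finite ((R(m := {b})) s)"
    using run_finite by simp
  show "i x = i y" if "s < Suc m" "x \<in> (R(m := {b})) s" "y \<in> (R(m := {b})) s"
    using that run_monochromatic[of s x y] by (auto split: if_splits)
  show "x < y" if "s < s'" "s' < Suc m" "x \<in> (R(m := {b})) s" "y \<in> (R(m := {b})) s'"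
  proof -
    have "x \<in> R s" "s < m"
      using that by (auto split: if_splits)
    then have "x < b"
      using assms(1) by blast
    then show ?thesis
      using that \<open>x \<in> R s\<close> run_less[of s s' x y] by (auto split: if_splits)
  qed
  show "i x \<noteq> i y" if "Suc s < Suc m" "x \<in> (R(m := {b})) s" "y \<in> (R(m := {b})) (Suc s)"
    using that assms(2)[of x] run_colour_change[of s x y] by (auto split: if_splits)
qed

lemma monochromatic_Diff_isolated_run:
  assumes "t < m" "isolates \<tau> (R t)"
  shows "monochromatic i \<tau> \<longleftrightarrow> monochromatic i {B\<in>\<tau>. B \<inter> R t = {}}"
proof
  assume outside: "monochromatic i {B\<in>\<tau>. B \<inter> R t = {}}"
  show "monochromatic i \<tau>"
    unfolding monochromatic_def
  proof (intro ballI)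
    fix B x y
    assume "B \<in> \<tau>" "x \<in> B" "y \<in> B"
    show "i x = i y"
    proof (cases "B \<inter> R t = {}")
      case True
      then show ?thesis
        using outside \<open>B \<in> \<tau>\<close> \<open>x \<in> B\<close> \<open>y \<in> B\<close> unfolding monochromatic_def by blast
    next
      case False
      then have "B \<subseteq> R t"
        using assms(2) \<open>B \<in> \<tau>\<close> unfolding isolates_def by blast
      then show ?thesis
        using run_monochromatic[OF assms(1)] \<open>x \<in> B\<close> \<open>y \<in> B\<close> by blast
    qed
  qed
qed (auto simp: monochromatic_def)

lemma isolates_Diff_isolated_run:
  assumes "t < m" "s < m" "s \<noteq> t" "isolates \<tau> (R t)"
  shows "isolates \<tau> (R s) \<longleftrightarrow> isolates {B\<in>\<tau>. B \<inter> R t = {}} (R s)"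
proof
  assume outside: "isolates {B\<in>\<tau>. B \<inter> R t = {}} (R s)"
  have "B \<subseteq> R s \<or> B \<inter> R s = {}" if "B \<in> \<tau>" for B
  proof (cases "B \<inter> R t = {}")
    case True
    then show ?thesis
      using outside that unfolding isolates_def by blast
  next
    case False
    then have "B \<subseteq> R t"
      using assms(4) that unfolding isolates_def by blast
    then show ?thesis
      using runs_disjoint[OF assms(2,1,3)] by blast
  qed
  then show "isolates \<tau> (R s)"
    unfolding isolates_def ..
qed (auto simp: isolates_def)

lemma convex_meets_next_run:
  assumes "order_convex (\<Union>t<m. R t) B" "x \<in> B" "x \<in> R t" "y \<in> B" "y \<in> R t'" "t < t'" "t' < m"
  shows "\<exists>z\<in>B. z \<in> R (Suc t)"
proof (cases "t' = Suc t")
  case True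
  then show ?thesis
    using assms(4,5) by blast
next
  case False
  then have "Suc t < t'"
    using assms(6) by simp
  obtain z where z: "z \<in> R (Suc t)"
    using run_nonempty \<open>Suc t < t'\<close> assms(7) by fastforce
  then have "x < z" "z < y" "z \<in> (\<Union>t<m. R t)"
    using run_less[of t "Suc t" x z] run_less[of "Suc t" t' z y] \<open>Suc t < t'\<close> assms(3,5,7) by auto
  then have "z \<in> B"
    using order_convexD[OF assms(1,2,4)] by simp
  then show ?thesis
    using z by blast
qed

lemma monochromatic_convex_within_run:
  assumes "B \<subseteq> (\<Union>t<m. R t)" "B \<noteq> {}" "order_convex (\<Union>t<m. R t) B"
    and monochromatic: "\<And>x y. x \<in> B \<Longrightarrow> y \<in> B \<Longrightarrow> i x = i y"
  shows "\<exists>t<m. B \<subseteq> R t"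
proof -
  obtain x t where x: "x \<in> B" "t < m" "x \<in> R t"
    using assms(1,2) by blast
  have "y \<in> R t" if y: "y \<in> B" for y
  proof -
    obtain t' where t': "t' < m" "y \<in> R t'"
      using assms(1) y by blast
    have "\<not> t < t'"
    proof
      assume "t < t'"
      then obtain z where "z \<in> B" "z \<in> R (Suc t)" "Suc t < m"
        using convex_meets_next_run[OF assms(3) x(1,3) y t'(2) _ t'(1)] t'(1) by auto
      then show False
        using run_colour_change[of t x z] monochromatic[of x z] x by blast
    qed
    moreover have "\<not> t' < t"
    proof
      assume "t' < t"
      then obtain z where "z \<in> B" "z \<in> R (Suc t')" "Suc t' < m"
        using convex_meets_next_run[OF assms(3) y t'(2) x(1,3) _ x(2)] x(2) by auto
      then show False
        using run_colour_change[of t' y z] monochromatic[of y z] y t'(2) by blast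
    qed
    ultimately show ?thesis
      using t'(2) by (metis linorder_neqE_nat)
  qed
  then show ?thesis
    using x(2) by blast
qed

lemma colour_runs_shrink:
  assumes "t < m" "B \<subset> R t"
  shows "colour_runs i (R(t := R t - B)) m"
proof
  have shrunk: "(R(t := R t - B)) s \<subseteq> R s" for s
    by simp
  show "(R(t := R t - B)) s \<noteq> {}" if "s < m" for s
    using assms run_nonempty[OF that] by auto
  show "finite ((R(t := R t - B)) s)" if "s < m" for s
    using finite_subset[OF shrunk run_finite[OF that]] .
  show "i x = i y" if "s < m" "x \<in> (R(t := R t - B)) s" "y \<in> (R(t := R t - B)) s" for s x y
    using that shrunk run_monochromatic by blast
  show "x < y" if "s < s'" "s' < m" "x \<in> (R(t := R t - B)) s" "y \<in> (R(t := R t - B)) s'" for s s' x y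
    using that shrunk run_less by blast
  show "i x \<noteq> i y" if "Suc s < m" "x \<in> (R(t := R t - B)) s" "y \<in> (R(t := R t - B)) (Suc s)" for s x y
    using that shrunk run_colour_change by blast
qed

end

lemma colour_runs_exist:
  assumes "finite Q"
  shows "\<exists>R m. colour_runs i R m \<and> (\<Union>t<m. R t) = Q"
  using assms
proof (induction Q rule: finite_linorder_max_induct)
  case empty
  have "colour_runs i (\<lambda>_. {}) 0"
    by unfold_locales simp_all
  then show ?case
    by fastforce
next
  case (insert b A)
  then obtain R m where runs: "colour_runs i R m" and A: "(\<Union>t<m. R t) = A"
    by blast
  interpret colour_runs i R m
    by (rule runs)
  have below: "x < b" if "x \<in> (\<Union>t<m. R t)" for x
    using that A insert.hyps by blast
  show ?case
  proof (cases "\<exists>a\<in>R (m - 1). 0 < m \<and> i a = i b")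
    case True
    then obtain a where "a \<in> R (m - 1)" "0 < m" "i a = i b"
      by blast
    then have "colour_runs i (R(m - 1 := insert b (R (m - 1)))) m"
      using colour_runs_extend_last below by blast
    moreover have "(\<Union>t<m. (R(m - 1 := insert b (R (m - 1)))) t) = insert b A"
      using A \<open>0 < m\<close> by (auto split: if_splits)
    ultimately show ?thesis
      by blast
  next
    case False
    then have "colour_runs i (R(m := {b})) (Suc m)"
      using colour_runs_new_run below by blast
    moreover have "(\<Union>t<Suc m. (R(m := {b})) t) = insert b A"
      using A by (auto simp: lessThan_Suc)
    ultimately show ?thesis
      by blast
  qed
qed

lemma (in colour_runs) noncrossing_block_within_run:
  assumes "0 < m" "\<tau> \<in> noncrossing_partitions (\<Union>t<m. R t)" "monochromatic i \<tau>"
  obtains B t where "B \<in> \<tau>" "order_convex (\<Union>t<m. R t) B" "t < m" "B \<subseteq> R t"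
proof -
  have "finite (\<Union>t<m. R t)" "(\<Union>t<m. R t) \<noteq> {}"
    using finite_Union_runs[of "{..<m}"] run_nonempty[OF \<open>0 < m\<close>] \<open>0 < m\<close> by auto
  then obtain B where B: "B \<in> \<tau>" "order_convex (\<Union>t<m. R t) B"
    using noncrossing_partition_has_convex_block assms(2) by blast
  moreover have "B \<subseteq> (\<Union>t<m. R t)" "B \<noteq> {}"
    using noncrossing_partitionsD(3,4)[OF assms(2) B(1)] by simp_all
  ultimately obtain t where "t < m" "B \<subseteq> R t"
    using monochromatic_convex_within_run assms(3) unfolding monochromatic_def by metis
  then show ?thesis
    using that B by blast
qed

lemma colour_runs_isolated_run:
  assumes "colour_runs i R m" "0 < m"
    and "\<tau> \<in> noncrossing_partitions (\<Union>t<m. R t)" "monochromatic i \<tau>"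
  shows "\<exists>t<m. isolates \<tau> (R t)"
  using assms
proof (induction "card (\<Union>t<m. R t)" arbitrary: R \<tau> rule: less_induct)
  case less
  interpret colour_runs i R m
    by fact
  define Q where "Q = (\<Union>t<m. R t)"
  have "finite Q"
    using finite_Union_runs[of "{..<m}"] by (simp add: Q_def)
  have \<tau>: "\<tau> \<in> noncrossing_partitions Q"
    using less.prems(3) by (simp add: Q_def)
  obtain B t0 where B: "B \<in> \<tau>" and t0: "t0 < m" "B \<subseteq> R t0"
    using noncrossing_block_within_run[OF \<open>0 < m\<close> less.prems(3,4)] by blast
  have "B \<subseteq> Q" "B \<noteq> {}"
    using noncrossing_partitionsD(3,4)[OF \<tau> B] by simp_all
  have other_blocks: "C \<inter> B = {}" if "C \<in> \<tau>" "C \<noteq> B" for C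
    using noncrossing_partitionsD(6)[OF \<tau> that(1) B that(2)] .
  show ?case
  proof (cases "B = R t0")
    case True
    then have "isolates \<tau> (R t0)"
      using other_blocks unfolding isolates_def by blast
    then show ?thesis
      using t0(1) by blast
  next
    case False
    define R' where "R' = R(t0 := R t0 - B)"
    have R': "R' s = R s - B" "B \<subseteq> R s \<or> B \<inter> R s = {}" if "s < m" for s
      using t0 runs_disjoint[OF that t0(1)] by (auto simp: R'_def)
    have "colour_runs i R' m"
      unfolding R'_def using colour_runs_shrink t0 False by blast
    moreover have "(\<Union>t<m. R' t) = Q - B"
      using R' by (auto simp: Q_def)
    moreover have "card (Q - B) < card Q"
      using \<open>finite Q\<close> \<open>B \<subseteq> Q\<close> \<open>B \<noteq> {}\<close> by (intro psubset_card_mono) auto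
    moreover have "\<tau> - {B} \<in> noncrossing_partitions (Q - B)"
      using noncrossing_partition_Diff_block[OF \<tau> B] .
    moreover have "monochromatic i (\<tau> - {B})"
      using less.prems(4) unfolding monochromatic_def by blast
    ultimately obtain s where "s < m" "isolates (\<tau> - {B}) (R' s)"
      using less.hyps[of R' "\<tau> - {B}"] \<open>0 < m\<close> by (auto simp: Q_def)
    then have "isolates \<tau> (R s)"
      using isolates_Diff_block[of \<tau> B "R s"] R' other_blocks by simp
    then show ?thesis
      using \<open>s < m\<close> by blast
  qed
qed

section \<open>Inclusion-exclusion over isolated runs\<close>

lemma sum_Pow_insert:
  assumes "finite A" "x \<notin> A"
  shows "(\<Sum>U\<in>Pow (insert x A). f U) = (\<Sum>U\<in>Pow A. f U) + (\<Sum>U\<in>Pow A. f (insert x U))"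
proof -
  have "inj_on (insert x) (Pow A)"
  proof (rule inj_onI)
    fix U V
    assume "U \<in> Pow A" "V \<in> Pow A" "insert x U = insert x V"
    then show "U = V"
      using assms(2) by (metis Diff_insert_absorb PowD subsetD)
  qed
  then show ?thesis
    unfolding Pow_insert using assms
    by (subst sum.union_disjoint) (auto simp: sum.reindex)
qed

lemma sum_Pow_cancel_nonempty:
  fixes c f g :: "'a set \<Rightarrow> 'b::comm_ring_1"
  assumes "finite A" "(\<Sum>U\<in>Pow A. c U * f U) = 0" "(\<Sum>U\<in>Pow A. c U * g U) = 0" "c {} = 1"
    and "\<And>U. U \<subseteq> A \<Longrightarrow> U \<noteq> {} \<Longrightarrow> f U = g U"
  shows "f {} = g {}"
proof -
  have split: "(\<Sum>U\<in>Pow A. c U * h U) = c {} * h {} + (\<Sum>U\<in>Pow A - {{}}. c U * h U)" for h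
    using assms(1) by (intro sum.remove) auto
  have "(\<Sum>U\<in>Pow A - {{}}. c U * f U) = (\<Sum>U\<in>Pow A - {{}}. c U * g U)"
    using assms(5) by (intro sum.cong) auto
  then have "c {} * f {} + (\<Sum>U\<in>Pow A - {{}}. c U * g U) = c {} * g {} + (\<Sum>U\<in>Pow A - {{}}. c U * g U)"
    using assms(2,3) split[of f] split[of g] by simp
  then show ?thesis
    using assms(4) by simp
qed

context colour_runs
begin

definition unisolated_sum :: "(nat set \<Rightarrow> 'b::comm_ring_1) \<Rightarrow> nat set \<Rightarrow> nat set \<Rightarrow> 'b" where
  "unisolated_sum w S T = (\<Sum>\<tau>\<in>{\<tau>\<in>noncrossing_partitions (\<Union>t\<in>S. R t).
      monochromatic i \<tau> \<and> (\<forall>t\<in>T. \<not> isolates \<tau> (R t))}. \<Prod>B\<in>\<tau>. w B)"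

lemma unisolated_sum_insert:
  assumes S: "S \<subseteq> {..<m}" "t \<in> S" and T: "T \<subseteq> S" "t \<notin> T"
  shows "unisolated_sum w S T
    = unisolated_sum w S (insert t T) + noncrossing_sum w (R t) * unisolated_sum w (S - {t}) T"
proof -
  define Q where "Q = (\<Union>s\<in>S. R s)"
  define Pr where "Pr \<tau> \<longleftrightarrow> monochromatic i \<tau> \<and> (\<forall>s\<in>T. \<not> isolates \<tau> (R s))" for \<tau>
  define A where "A = {\<tau>\<in>noncrossing_partitions Q. Pr \<tau>}"
  have "t < m" "R t \<subseteq> Q"
    using S by (auto simp: Q_def)
  have "finite Q"
    using finite_Union_runs[OF S(1)] by (simp add: Q_def)
  have Pr_outside: "Pr \<tau> \<longleftrightarrow> Pr {B\<in>\<tau>. B \<inter> R t = {}}" if iso: "isolates \<tau> (R t)" for \<tau>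
  proof -
    have "isolates \<tau> (R s) \<longleftrightarrow> isolates {B\<in>\<tau>. B \<inter> R t = {}} (R s)" if "s \<in> T" for s
      using that S T iso by (intro isolates_Diff_isolated_run[OF \<open>t < m\<close>]) auto
    then show ?thesis
      unfolding Pr_def using monochromatic_Diff_isolated_run[OF \<open>t < m\<close> iso] by blast
  qed
  have isolating: "A \<inter> {\<tau>. isolates \<tau> (R t)}
      = {\<tau>\<in>noncrossing_partitions Q. isolates \<tau> (R t) \<and> Pr {B\<in>\<tau>. B \<inter> R t = {}}}"
    using Pr_outside unfolding A_def by blast
  have "unisolated_sum w S T = (\<Sum>\<tau>\<in>A. \<Prod>B\<in>\<tau>. w B)"
    by (simp add: unisolated_sum_def A_def Pr_def Q_def)
  also have "\<dots> = (\<Sum>\<tau>\<in>A \<inter> {\<tau>. isolates \<tau> (R t)}. \<Prod>B\<in>\<tau>. w B)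
      + (\<Sum>\<tau>\<in>A - {\<tau>. isolates \<tau> (R t)}. \<Prod>B\<in>\<tau>. w B)"
    using finite_noncrossing_partitions[OF \<open>finite Q\<close>] by (intro sum.Int_Diff) (simp add: A_def)
  also have "(\<Sum>\<tau>\<in>A \<inter> {\<tau>. isolates \<tau> (R t)}. \<Prod>B\<in>\<tau>. w B)
      = noncrossing_sum w (R t) * (\<Sum>\<tau>\<in>{\<tau>\<in>noncrossing_partitions (Q - R t). Pr \<tau>}. \<Prod>B\<in>\<tau>. w B)"
    unfolding isolating
    by (rule sum_noncrossing_isolating[OF \<open>finite Q\<close> \<open>R t \<subseteq> Q\<close>])
      (use order_convex_run[OF S] in \<open>simp add: Q_def\<close>)
  also have "(\<Sum>\<tau>\<in>{\<tau>\<in>noncrossing_partitions (Q - R t). Pr \<tau>}. \<Prod>B\<in>\<tau>. w B) = unisolated_sum w (S - {t}) T"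
    using Union_runs_Diff[OF S] by (simp add: unisolated_sum_def Pr_def Q_def)
  also have "(\<Sum>\<tau>\<in>A - {\<tau>. isolates \<tau> (R t)}. \<Prod>B\<in>\<tau>. w B) = unisolated_sum w S (insert t T)"
    unfolding unisolated_sum_def A_def Pr_def Q_def by (rule sum.cong) auto
  finally show ?thesis
    by (simp add: add.commute)
qed

lemma unisolated_sum_expand:
  assumes "finite T" "T \<subseteq> S" "S \<subseteq> {..<m}"
  shows "unisolated_sum w S T
    = (\<Sum>U\<in>Pow T. (\<Prod>t\<in>U. - noncrossing_sum w (R t)) * unisolated_sum w (S - U) {})"
  using assms
proof (induction T arbitrary: S rule: finite_induct)
  case empty
  then show ?case
    by simp
next
  case (insert t T)
  define f where "f S U = (\<Prod>t\<in>U. - noncrossing_sum w (R t)) * unisolated_sum w (S - U) {}" for S U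
  have sub: "T \<subseteq> S - {t}" "S - {t} \<subseteq> {..<m}"
    using insert.prems insert.hyps by auto
  have "f S (insert t U) = - noncrossing_sum w (R t) * f (S - {t}) U" if "U \<in> Pow T" for U
  proof -
    have "t \<notin> U" "finite U" "S - insert t U = S - {t} - U"
      using that insert.hyps finite_subset by auto
    then show ?thesis
      by (simp add: f_def)
  qed
  moreover have IH: "(\<Sum>U\<in>Pow T. f S U) = unisolated_sum w S T"
    "(\<Sum>U\<in>Pow T. f (S - {t}) U) = unisolated_sum w (S - {t}) T"
    using insert.IH[of S] insert.IH[OF sub] insert.prems by (simp_all add: f_def)
  ultimately have "(\<Sum>U\<in>Pow (insert t T). f S U)
      = unisolated_sum w S T - noncrossing_sum w (R t) * unisolated_sum w (S - {t}) T"
    using insert.hyps by (simp add: sum_Pow_insert sum_negf flip: sum_distrib_left)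
  also have "\<dots> = unisolated_sum w S (insert t T)"
    using unisolated_sum_insert[of S t T w] insert.prems insert.hyps by simp
  finally show ?case
    by (simp add: f_def)
qed

lemma unisolated_sum_all_runs:
  assumes "0 < m"
  shows "unisolated_sum w {..<m} {..<m} = 0"
proof -
  have "{\<tau>\<in>noncrossing_partitions (\<Union>t\<in>{..<m}. R t).
      monochromatic i \<tau> \<and> (\<forall>t\<in>{..<m}. \<not> isolates \<tau> (R t))} = {}"
    using colour_runs_isolated_run[OF colour_runs_axioms assms] by auto
  then show ?thesis
    unfolding unisolated_sum_def by (simp only: sum.empty)
qed

lemma alternating_sum_unisolated:
  assumes "0 < m"
  shows "(\<Sum>U\<in>Pow {..<m}. (\<Prod>t\<in>U. - noncrossing_sum w (R t)) * unisolated_sum w ({..<m} - U) {}) = 0"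
proof -
  have "(\<Sum>U\<in>Pow {..<m}. (\<Prod>t\<in>U. - noncrossing_sum w (R t)) * unisolated_sum w ({..<m} - U) {})
      = unisolated_sum w {..<m} {..<m}"
    by (rule unisolated_sum_expand[symmetric]) simp_all
  also have "\<dots> = 0"
    by (rule unisolated_sum_all_runs[OF assms])
  finally show ?thesis .
qed

lemma alternating_sum_cumulants:
  assumes "0 < m" "phi 1 = 1"
  shows "(\<Sum>U\<in>Pow {..<m}. (\<Prod>t\<in>U. - moment phi X (R t))
      * unisolated_sum (free_cumulant phi X) ({..<m} - U) {}) = 0"
proof -
  have "moment phi X (R t) = noncrossing_sum (free_cumulant phi X) (R t)" if "t < m" for t
    using moment_cumulant run_finite[OF that] assms(2) by blast
  then have "(\<Prod>t\<in>U. - moment phi X (R t)) = (\<Prod>t\<in>U. - noncrossing_sum (free_cumulant phi X) (R t))"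
    if "U \<in> Pow {..<m}" for U
    using that by (intro prod.cong) auto
  then show ?thesis
    using alternating_sum_unisolated[OF assms(1)] by simp
qed

lemma unisolated_sum_empty:
  "unisolated_sum w S {} = (\<Sum>\<tau>\<in>{\<tau>\<in>noncrossing_partitions (\<Union>t\<in>S. R t). monochromatic i \<tau>}. \<Prod>B\<in>\<tau>. w B)"
  by (simp add: unisolated_sum_def)

end

section \<open>Free products\<close>

lemma cplx_algebraD:
  assumes "cplx_algebra sm"
  shows "sm c (x + y) = sm c x + sm c y" "sm (c + d) x = sm c x + sm d x"
    "sm (c * d) x = sm c (sm d x)" "sm 1 x = x" "sm c (x * y) = sm c x * y" "sm c (x * y) = x * sm c y"
  using assms unfolding cplx_algebra_def by blast+

lemma scale_zero_right: "cplx_algebra sm \<Longrightarrow> sm c 0 = 0"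
  using cplx_algebraD(1)[of sm c 0 0] by simp

lemma scale_minus_left:
  assumes "cplx_algebra sm"
  shows "sm (- c) x = - sm c x"
proof -
  have "sm c x + sm (- c) x = 0"
    using cplx_algebraD(2)[OF assms, of c "- c" x] cplx_algebraD(2)[OF assms, of 0 0 x] by simp
  then show ?thesis
    by (simp add: add_eq_0_iff)
qed

lemma scale_sum: "cplx_algebra sm \<Longrightarrow> sm c (\<Sum>U\<in>S. f U) = (\<Sum>U\<in>S. sm c (f U))"
  by (induction S rule: infinite_finite_induct) (simp_all add: scale_zero_right cplx_algebraD(1))

lemma unital_lin_functionalD:
  assumes "unital_lin_functional sm f"
  shows "f (x + y) = f x + f y" "f (sm c x) = c * f x" "f 1 = 1"
  using assms unfolding unital_lin_functional_def by blast+

lemma lin_functional_diff: "unital_lin_functional sm f \<Longrightarrow> f (x - y) = f x - f y"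
  using unital_lin_functionalD(1)[of sm f "x - y" y] by (simp add: eq_diff_eq)

lemma lin_functional_sum:
  "unital_lin_functional sm f \<Longrightarrow> f (\<Sum>U\<in>S. g U) = (\<Sum>U\<in>S. f (g U))"
  using unital_lin_functionalD(1)[of sm f 0 0]
  by (induction S rule: infinite_finite_induct) (simp_all add: unital_lin_functionalD(1))

lemma unital_alg_homD:
  assumes "unital_alg_hom smA smB h"
  shows "h (x + y) = h x + h y" "h (x * y) = h x * h y" "h (smA c x) = smB c (h x)" "h 1 = 1"
  using assms unfolding unital_alg_hom_def by blast+

lemma alg_hom_diff: "unital_alg_hom smA smB h \<Longrightarrow> h (x - y) = h x - h y"
  using unital_alg_homD(1)[of smA smB h "x - y" y] by (simp add: eq_diff_eq)

lemma alg_hom_prod_list: "unital_alg_hom smA smB h \<Longrightarrow> h (prod_list xs) = prod_list (map h xs)"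
  by (induction xs) (simp_all add: unital_alg_homD(2,4))

lemma prod_list_minus_scalars:
  assumes "cplx_algebra sm"
  shows "prod_list (map (\<lambda>t. f t - sm (c t) 1) [0..<m])
    = (\<Sum>U\<in>Pow {..<m}. sm (\<Prod>t\<in>U. - c t) (prod_list (map f (filter (\<lambda>t. t \<notin> U) [0..<m]))))"
proof (induction m)
  case 0
  then show ?case
    using cplx_algebraD(4)[OF assms] by simp
next
  case (Suc m)
  define p where "p U = prod_list (map f (filter (\<lambda>t. t \<notin> U) [0..<m]))" for U
  define F where "F U = sm (\<Prod>t\<in>U. - c t) (prod_list (map f (filter (\<lambda>t. t \<notin> U) [0..<Suc m])))" for U
  have keep_m: "F U = sm (\<Prod>t\<in>U. - c t) (p U * f m)" if "U \<in> Pow {..<m}" for U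
    using that by (auto simp: F_def p_def)
  have drop_m: "F (insert m U) = sm (\<Prod>t\<in>insert m U. - c t) (p U)" if "U \<in> Pow {..<m}" for U
    using that unfolding F_def p_def
    by (auto intro!: arg_cong[where f = "\<lambda>xs. sm _ (prod_list (map f xs))"] filter_cong)
  have "prod_list (map (\<lambda>t. f t - sm (c t) 1) [0..<Suc m])
      = (\<Sum>U\<in>Pow {..<m}. sm (\<Prod>t\<in>U. - c t) (p U)) * f m - sm (c m) (\<Sum>U\<in>Pow {..<m}. sm (\<Prod>t\<in>U. - c t) (p U))"
    using Suc.IH by (simp add: p_def right_diff_distrib cplx_algebraD(6)[OF assms, of _ _ 1, symmetric])
  also have "\<dots> = (\<Sum>U\<in>Pow {..<m}. sm (\<Prod>t\<in>U. - c t) (p U * f m))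
      + (\<Sum>U\<in>Pow {..<m}. sm (\<Prod>t\<in>insert m U. - c t) (p U))"
  proof -
    have "(\<Prod>t\<in>insert m U. - c t) = - c m * (\<Prod>t\<in>U. - c t)" if "U \<in> Pow {..<m}" for U
      using that finite_subset[of U "{..<m}"] by (subst prod.insert) auto
    then show ?thesis
      by (simp add: sum_distrib_right scale_sum[OF assms] cplx_algebraD(3,5)[OF assms]
          scale_minus_left[OF assms] sum_negf)
  qed
  also have "\<dots> = (\<Sum>U\<in>Pow {..<Suc m}. F U)"
    by (simp add: lessThan_Suc sum_Pow_insert keep_m drop_m)
  finally show ?case
    by (simp add: F_def)
qed

lemma free_exch_systemD:
  assumes "free_exch_system smA phi smU psi iota"
  shows "cplx_algebra smU" "unital_lin_functional smU psi" "unital_alg_hom smA smU (iota k)"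
    and "ks \<noteq> [] \<Longrightarrow> length as = length ks \<Longrightarrow> (\<forall>j. Suc j < length ks \<longrightarrow> ks ! j \<noteq> ks ! Suc j) \<Longrightarrow>
      (\<forall>a\<in>set as. phi a = 0) \<Longrightarrow> psi (prod_list (map2 iota ks as)) = 0"
  using assms unfolding free_exch_system_def by blast+

lemma free_alternating_sum:
  assumes free: "free_exch_system smA phi smU psi iota" and phi: "unital_lin_functional smA phi"
    and "0 < m" and alternating: "\<And>t. Suc t < m \<Longrightarrow> k t \<noteq> k (Suc t)"
  shows "(\<Sum>U\<in>Pow {..<m}. (\<Prod>t\<in>U. - phi (a t))
      * psi (prod_list (map (\<lambda>t. iota (k t) (a t)) (filter (\<lambda>t. t \<notin> U) [0..<m])))) = 0"
proof -
  note hom = free_exch_systemD(3)[OF free]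
  \<comment> \<open>freeness applied to the centred elements \<open>a t - \<phi>(a t) 1\<close>\<close>
  have "psi (prod_list (map2 iota (map k [0..<m]) (map (\<lambda>t. a t - smA (phi (a t)) 1) [0..<m]))) = 0"
    using \<open>0 < m\<close> alternating
    by (intro free_exch_systemD(4)[OF free])
      (auto simp: lin_functional_diff[OF phi] unital_lin_functionalD(2,3)[OF phi])
  moreover have "map2 iota (map k [0..<m]) (map (\<lambda>t. a t - smA (phi (a t)) 1) [0..<m])
      = map (\<lambda>t. iota (k t) (a t) - smU (phi (a t)) 1) [0..<m]"
    by (simp add: zip_map_map zip_same_conv_map alg_hom_diff[OF hom] unital_alg_homD(3,4)[OF hom])
  ultimately have "psi (prod_list (map (\<lambda>t. iota (k t) (a t) - smU (phi (a t)) 1) [0..<m])) = 0"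
    by simp
  then show ?thesis
    by (simp add: prod_list_minus_scalars[OF free_exch_systemD(1)[OF free]]
        lin_functional_sum[OF free_exch_systemD(2)[OF free]]
        unital_lin_functionalD(2)[OF free_exch_systemD(2)[OF free]])
qed

section \<open>Moments in the free product\<close>

lemma prod_list_concat: "prod_list (concat xss) = prod_list (map prod_list xss)"
  by (induction xss) simp_all

lemma moment_Union_runs:
  fixes i :: "nat \<Rightarrow> nat"
  assumes "colour_runs i R m" and hom: "\<And>k. unital_alg_hom smA smU (iota k)" and "W \<subseteq> {..<m}"
  shows "moment psi (\<lambda>j. iota (i j) (X j)) (\<Union>t\<in>W. R t)
    = psi (prod_list (map (\<lambda>t. iota (colour_runs.run_colour i R t) (prod_list (map X (sorted_list_of_set (R t)))))
        (filter (\<lambda>t. t \<in> W) [0..<m])))"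
proof -
  interpret colour_runs i R m
    by fact
  have run_word: "prod_list (map (\<lambda>j. iota (i j) (X j)) (sorted_list_of_set (R t)))
      = iota (run_colour t) (prod_list (map X (sorted_list_of_set (R t))))" if "t < m" for t
  proof -
    have "map (\<lambda>j. iota (i j) (X j)) (sorted_list_of_set (R t))
        = map (iota (run_colour t)) (map X (sorted_list_of_set (R t)))"
      using that colour_eq_run_colour by (simp add: set_sorted_list_of_run)
    then show ?thesis
      by (simp only: alg_hom_prod_list[OF hom])
  qed
  show ?thesis
    unfolding moment_def sorted_list_of_Union_runs[OF assms(3)] map_concat prod_list_concat map_map
    by (intro arg_cong[where f = psi] arg_cong[where f = prod_list] map_cong refl) (auto simp: run_word)
qed

lemma alternating_sum_moments:
  fixes i :: "nat \<Rightarrow> nat"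
  assumes "colour_runs i R m" "0 < m"
    and free: "free_exch_system smA phi smU psi iota" and phi: "unital_lin_functional smA phi"
  shows "(\<Sum>U\<in>Pow {..<m}. (\<Prod>t\<in>U. - moment phi X (R t))
      * moment psi (\<lambda>j. iota (i j) (X j)) (\<Union>t\<in>{..<m} - U. R t)) = 0"
proof -
  interpret colour_runs i R m
    by fact
  define a where "a t = prod_list (map X (sorted_list_of_set (R t)))" for t
  have "moment psi (\<lambda>j. iota (i j) (X j)) (\<Union>t\<in>{..<m} - U. R t)
      = psi (prod_list (map (\<lambda>t. iota (run_colour t) (a t)) (filter (\<lambda>t. t \<in> {..<m} - U) [0..<m])))" for U
    unfolding a_def
    by (rule moment_Union_runs[where iota = iota, OF assms(1) free_exch_systemD(3)[OF free]]) auto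
  also have "filter (\<lambda>t. t \<in> {..<m} - U) [0..<m] = filter (\<lambda>t. t \<notin> U) [0..<m]" for U
    by (rule filter_cong) auto
  finally have word: "moment psi (\<lambda>j. iota (i j) (X j)) (\<Union>t\<in>{..<m} - U. R t)
      = psi (prod_list (map (\<lambda>t. iota (run_colour t) (a t)) (filter (\<lambda>t. t \<notin> U) [0..<m])))" for U .
  have "(\<Sum>U\<in>Pow {..<m}. (\<Prod>t\<in>U. - phi (a t))
      * psi (prod_list (map (\<lambda>t. iota (run_colour t) (a t)) (filter (\<lambda>t. t \<notin> U) [0..<m])))) = 0"
    by (rule free_alternating_sum[where k = run_colour, OF free phi \<open>0 < m\<close> run_colour_neq_Suc])
  then show ?thesis
    unfolding word by (simp add: moment_def a_def)
qed

theorem moment_free_product: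
  fixes i :: "nat \<Rightarrow> nat"
  assumes free: "free_exch_system smA phi smU psi iota" and phi: "unital_lin_functional smA phi"
    and "finite Q"
  shows "moment psi (\<lambda>j. iota (i j) (X j)) Q
    = (\<Sum>\<tau>\<in>{\<tau>\<in>noncrossing_partitions Q. monochromatic i \<tau>}. \<Prod>B\<in>\<tau>. free_cumulant phi X B)"
  using \<open>finite Q\<close>
proof (induction "card Q" arbitrary: Q rule: less_induct)
  case less
  obtain R m where runs: "colour_runs i R m" and Q: "Q = (\<Union>t<m. R t)"
    using colour_runs_exist[OF less.prems] by metis
  interpret colour_runs i R m
    by (rule runs)
  define word where "word U = moment psi (\<lambda>j. iota (i j) (X j)) (\<Union>t\<in>{..<m} - U. R t)" for U
  define nc where "nc U = unisolated_sum (free_cumulant phi X) ({..<m} - U) {}" for U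
  have "word {} = nc {}"
  proof (cases "m = 0")
    case True
    have "{\<tau>\<in>noncrossing_partitions {}. monochromatic i \<tau>} = {{}}"
      by (auto simp: monochromatic_def)
    then show ?thesis
      using True free_exch_systemD(2)[OF free]
      by (simp add: word_def nc_def moment_def unisolated_sum_empty unital_lin_functionalD(3))
  next
    case False
    show ?thesis
    proof (rule sum_Pow_cancel_nonempty[of "{..<m}" "\<lambda>U. \<Prod>t\<in>U. - moment phi X (R t)"])
      show "(\<Sum>U\<in>Pow {..<m}. (\<Prod>t\<in>U. - moment phi X (R t)) * word U) = 0"
        using alternating_sum_moments[OF runs _ free phi] False unfolding word_def by simp
      show "(\<Sum>U\<in>Pow {..<m}. (\<Prod>t\<in>U. - moment phi X (R t)) * nc U) = 0"
        using alternating_sum_cumulants unital_lin_functionalD(3)[OF phi] False unfolding nc_def by simp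
      \<comment> \<open>for \<open>U \<noteq> {}\<close> the word is shorter, so the induction hypothesis applies\<close>
      show "word U = nc U" if U: "U \<subseteq> {..<m}" "U \<noteq> {}" for U
      proof -
        obtain t where t: "t \<in> U" "t < m"
          using U by blast
        have "(\<Union>s\<in>{..<m} - U. R s) \<subset> Q"
          using t run_nonempty[OF t(2)] runs_disjoint[OF t(2)] by (auto simp: Q)
        then show ?thesis
          using less.hyps[of "\<Union>s\<in>{..<m} - U. R s"] less.prems psubset_card_mono
            finite_subset[of _ Q] by (auto simp: word_def nc_def unisolated_sum_empty)
      qed
    qed simp_all
  qed
  then show ?case
    by (simp add: word_def nc_def unisolated_sum_empty Q)
qed

section \<open>The partition lattice\<close>

lemma finite_poset_set_partitions: "finite_poset (set_partitions n) refines"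
proof
  show "finite (set_partitions n)"
    unfolding set_partitions_def by (rule finitely_many_partition_on) simp
  show "refines \<sigma> \<sigma>" for \<sigma>
    unfolding refines_def by blast
  show "refines \<sigma> \<rho>" if "refines \<sigma> \<tau>" "refines \<tau> \<rho>" for \<sigma> \<tau> \<rho>
    using that unfolding refines_def by (meson order_trans)
  show "\<sigma> = \<tau>" if "\<sigma> \<in> set_partitions n" "\<tau> \<in> set_partitions n" "refines \<sigma> \<tau>" "refines \<tau> \<sigma>" for \<sigma> \<tau>
    using that refines_asym[of "{1..n}" \<sigma> \<tau>]
    unfolding set_partitions_def Disjoint_Sets.refines_def Defs.refines_def by blast
qed

lemma block_index_eq_Min:
  assumes "partition_on A \<sigma>" "B \<in> \<sigma>" "x \<in> B"
  shows "block_index \<sigma> x = Min B"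
proof -
  have "(THE C. C \<in> \<sigma> \<and> x \<in> C) = B"
    by (rule the_equality) (use assms partition_on_block_disjoint[OF assms(1)] in blast)+
  then show ?thesis
    by (simp add: block_index_def)
qed

lemma block_index_eq_iff:
  assumes \<sigma>: "partition_on A \<sigma>" and "finite A" "x \<in> A" "y \<in> A"
  shows "block_index \<sigma> x = block_index \<sigma> y \<longleftrightarrow> (\<exists>C\<in>\<sigma>. x \<in> C \<and> y \<in> C)"
proof -
  obtain C D where C: "C \<in> \<sigma>" "x \<in> C" and D: "D \<in> \<sigma>" "y \<in> D"
    using partition_on_cover[OF \<sigma>] assms(3,4) by metis
  have "Min C \<in> C" "Min D \<in> D"
    using Min_in[OF partition_on_block_finite[OF \<sigma> \<open>finite A\<close>]] C D by blast+
  moreover have "C = D" if "Min C = Min D"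
  proof (rule ccontr)
    assume "C \<noteq> D"
    then have "C \<inter> D = {}"
      by (rule partition_on_block_disjoint[OF \<sigma> C(1) D(1)])
    then show False
      using that \<open>Min C \<in> C\<close> \<open>Min D \<in> D\<close> by auto
  qed
  ultimately have "Min C = Min D \<longleftrightarrow> C = D"
    by blast
  moreover have "C = D \<longleftrightarrow> (\<exists>E\<in>\<sigma>. x \<in> E \<and> y \<in> E)"
    using partition_on_block_disjoint[OF \<sigma>] C D by blast
  ultimately show ?thesis
    using block_index_eq_Min[OF \<sigma> C] block_index_eq_Min[OF \<sigma> D] by simp
qed

lemma monochromatic_block_index_iff_refines:
  assumes \<sigma>: "partition_on A \<sigma>" and \<tau>: "partition_on A \<tau>" and "finite A"
  shows "monochromatic (block_index \<sigma>) \<tau> \<longleftrightarrow> refines \<tau> \<sigma>"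
proof
  assume mono: "monochromatic (block_index \<sigma>) \<tau>"
  show "refines \<tau> \<sigma>"
    unfolding refines_def
  proof
    fix B
    assume "B \<in> \<tau>"
    then have "B \<subseteq> A" "B \<noteq> {}"
      using partition_onD1[OF \<tau>] partition_onD3[OF \<tau>] by auto
    then obtain x where "x \<in> B"
      by blast
    then obtain C where "C \<in> \<sigma>" "x \<in> C"
      using partition_on_cover[OF \<sigma>] \<open>B \<subseteq> A\<close> by blast
    have "y \<in> C" if "y \<in> B" for y
    proof -
      have "block_index \<sigma> x = block_index \<sigma> y"
        using mono \<open>B \<in> \<tau>\<close> \<open>x \<in> B\<close> that unfolding monochromatic_def by blast
      moreover have "x \<in> A" "y \<in> A"
        using \<open>B \<subseteq> A\<close> \<open>x \<in> B\<close> that by blast+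
      ultimately obtain E where "E \<in> \<sigma>" "x \<in> E" "y \<in> E"
        using block_index_eq_iff[OF \<sigma> \<open>finite A\<close>] by blast
      then show ?thesis
        using partition_on_block_disjoint[OF \<sigma> _ \<open>C \<in> \<sigma>\<close>] \<open>x \<in> C\<close> by blast
    qed
    then show "\<exists>C\<in>\<sigma>. B \<subseteq> C"
      using \<open>C \<in> \<sigma>\<close> by blast
  qed
next
  assume "refines \<tau> \<sigma>"
  then show "monochromatic (block_index \<sigma>) \<tau>"
    unfolding monochromatic_def refines_def using block_index_eq_Min[OF \<sigma>] by (metis subsetD)
qed

lemma phiF_eq_noncrossing_sum:
  assumes free: "free_exch_system smA phi smU psi iota" and phi: "unital_lin_functional smA phi"
    and "\<sigma> \<in> set_partitions n"
  shows "phiF iota psi n \<sigma> X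
    = (\<Sum>\<tau>\<in>{\<tau>\<in>noncrossing_partitions {1..n}. refines \<tau> \<sigma>}. \<Prod>B\<in>\<tau>. free_cumulant phi X B)"
proof -
  have "sorted_list_of_set {1..n} = [1..<Suc n]"
    by (simp add: atLeastLessThanSuc_atLeastAtMost[symmetric])
  then have "phiF iota psi n \<sigma> X = moment psi (\<lambda>j. iota (block_index \<sigma> j) (X j)) {1..n}"
    by (simp add: phiF_def moment_def)
  also have "\<dots> = (\<Sum>\<tau>\<in>{\<tau>\<in>noncrossing_partitions {1..n}. monochromatic (block_index \<sigma>) \<tau>}.
      \<Prod>B\<in>\<tau>. free_cumulant phi X B)"
    by (rule moment_free_product[OF free phi]) simp
  also have "{\<tau>\<in>noncrossing_partitions {1..n}. monochromatic (block_index \<sigma>) \<tau>}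
      = {\<tau>\<in>noncrossing_partitions {1..n}. refines \<tau> \<sigma>}"
    using monochromatic_block_index_iff_refines[of "{1..n}" \<sigma>] assms(3) noncrossing_partitionsD(1)
    unfolding set_partitions_def by blast
  finally show ?thesis .
qed

theorem proposition4p4:
  fixes smA :: "complex \<Rightarrow> 'a::ring_1 \<Rightarrow> 'a" and phi :: "'a \<Rightarrow> complex"
    and smU :: "complex \<Rightarrow> 'u::ring_1 \<Rightarrow> 'u" and psi :: "'u \<Rightarrow> complex"
    and iota :: "nat \<Rightarrow> 'a \<Rightarrow> 'u"
    and n :: nat and \<pi> :: "nat set set" and X :: "nat \<Rightarrow> 'a"
  assumes "cplx_algebra smA"
    and "unital_lin_functional smA phi"
    and "free_exch_system smA phi smU psi iota"
    and "\<pi> \<in> set_partitions n"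
    and "has_crossing \<pi>"
  shows "KF iota psi n \<pi> X = 0"
proof -
  have "noncrossing_partitions {1..n} \<subseteq> set_partitions n"
    by (auto simp: noncrossing_partitions_def set_partitions_def)
  have "KF iota psi n \<pi> X = (\<Sum>\<sigma>\<in>{\<sigma>\<in>set_partitions n. refines \<sigma> \<pi>}.
      phiF iota psi n \<sigma> X * of_int (moebius (set_partitions n) refines \<sigma> \<pi>))"
    by (simp add: KF_def moebius_part_def)
  also have "\<dots> = (if \<pi> \<in> noncrossing_partitions {1..n} then \<Prod>B\<in>\<pi>. free_cumulant phi X B else 0)"
    by (rule finite_poset.moebius_inversion[OF finite_poset_set_partitions \<open>_ \<subseteq> _\<close> assms(4)])
      (rule phiF_eq_noncrossing_sum[OF assms(3,2)])
  also have "\<dots> = 0"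
    using assms(5) by (simp add: noncrossing_partitions_def)
  finally show ?thesis .
qed

end
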